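(* Let $P$ be the Petersen graph, i.e. the graph whose vertices are the $2$-element subsets of $\{1,2,3,4,5\}$, two vertices being adjacent if and only if the corresponding subsets are disjoint. Then the resolving topological index of $P$ is $\mathcal{R}(P)=\frac{5}{3}$.
   Context: All graphs are finite, simple and connected, with at least two vertices; $d(u,v)$ denotes the shortest-path distance. $V_p$ denotes the set of all unordered pairs $(u,v)$ of distinct vertices. A vertex $x$ resolves the pair $(u,v)$ if $d(x,u)\neq d(x,v)$. For $(u,v)\in V_p$, $R(u,v)$ is the set of all vertices resolving $(u,v)$ (it always contains $u$ and $v$). The resolving share of a vertex $w$ for $(u,v)$ is $r_w(u,v)=\frac{1}{|R(u,v)|}$ if $w$ resolves $u$ and $v$, and $r_w(u,v)=0$ otherwise. For a vertex $w$, $R(w)$ is the set of pairs in $V_p$ resolved by $w$ (nonempty, as it contains all pairs $(w,x)$). The average resolving share of $w$ is $ar_w(G)=\frac{1}{|R(w)|}\sum_{(u,v)\in R(w)} r_w(u,v)$, and the resolving topological index of $G$ is $\mathcal{R}(G)=\sum_{w\in V(G)} ar_w(G)$. *)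

theory Defs
  imports Complex_Main
begin

definition walk :: "'a set \<Rightarrow> ('a \<Rightarrow> 'a \<Rightarrow> bool) \<Rightarrow> 'a list \<Rightarrow> bool" where
  "walk V E xs \<longleftrightarrow> xs \<noteq> [] \<and> set xs \<subseteq> V \<and> (\<forall>i. Suc i < length xs \<longrightarrow> E (xs ! i) (xs ! Suc i))"

definition gdist :: "'a set \<Rightarrow> ('a \<Rightarrow> 'a \<Rightarrow> bool) \<Rightarrow> 'a \<Rightarrow> 'a \<Rightarrow> nat" where
  "gdist V E u v = (LEAST n. \<exists>xs. walk V E xs \<and> hd xs = u \<and> last xs = v \<and> length xs = Suc n)"

definition connected_graph :: "'a set \<Rightarrow> ('a \<Rightarrow> 'a \<Rightarrow> bool) \<Rightarrow> bool" where
  "connected_graph V E \<longleftrightarrow> (\<forall>u\<in>V. \<forall>v\<in>V. \<exists>xs. walk V E xs \<and> hd xs = u \<and> last xs = v)"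

definition vpairs :: "'a set \<Rightarrow> 'a set set" where
  "vpairs V = {{u, v} | u v. u \<in> V \<and> v \<in> V \<and> u \<noteq> v}"

definition resolves :: "'a set \<Rightarrow> ('a \<Rightarrow> 'a \<Rightarrow> bool) \<Rightarrow> 'a \<Rightarrow> 'a set \<Rightarrow> bool" where
  "resolves V E x p \<longleftrightarrow> (\<exists>u v. p = {u, v} \<and> u \<noteq> v \<and> gdist V E x u \<noteq> gdist V E x v)"

definition resolving_set_of_pair :: "'a set \<Rightarrow> ('a \<Rightarrow> 'a \<Rightarrow> bool) \<Rightarrow> 'a set \<Rightarrow> 'a set" where
  "resolving_set_of_pair V E p = {x \<in> V. resolves V E x p}"

definition resolving_share :: "'a set \<Rightarrow> ('a \<Rightarrow> 'a \<Rightarrow> bool) \<Rightarrow> 'a \<Rightarrow> 'a set \<Rightarrow> real" where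
  "resolving_share V E w p =
     (if resolves V E w p then 1 / real (card (resolving_set_of_pair V E p)) else 0)"

definition pairs_resolved_by :: "'a set \<Rightarrow> ('a \<Rightarrow> 'a \<Rightarrow> bool) \<Rightarrow> 'a \<Rightarrow> 'a set set" where
  "pairs_resolved_by V E w = {p \<in> vpairs V. resolves V E w p}"

definition avg_resolving_share :: "'a set \<Rightarrow> ('a \<Rightarrow> 'a \<Rightarrow> bool) \<Rightarrow> 'a \<Rightarrow> real" where
  "avg_resolving_share V E w =
     (1 / real (card (pairs_resolved_by V E w))) *
     (\<Sum>p\<in>pairs_resolved_by V E w. resolving_share V E w p)"

definition resolving_topological_index :: "'a set \<Rightarrow> ('a \<Rightarrow> 'a \<Rightarrow> bool) \<Rightarrow> real" where
  "resolving_topological_index V E = (\<Sum>w\<in>V. avg_resolving_share V E w)"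

definition petersen_V :: "nat set set" where
  "petersen_V = {S. S \<subseteq> {1..5} \<and> card S = 2}"

definition petersen_E :: "nat set \<Rightarrow> nat set \<Rightarrow> bool" where
  "petersen_E S T \<longleftrightarrow> S \<inter> T = {}"

end

theory Submission imports Defs begin

text \<open>The Petersen graph has diameter 2: two distinct non-adjacent vertices (intersecting
  2-subsets) have a common neighbour, so all distances are 0, 1 or 2 and are read off from the
  subsets directly. With these distances one checks that for any two distinct vertices exactly
  four vertices are equidistant from both, so every pair is resolved by exactly 6 of the 10
  vertices. When every pair has the same number k of resolving vertices, every resolving share
  equals 1/k, hence every average resolving share is 1/k and the index is |V|/k = 10/6.\<close>

lemma walk_singleton: "u \<in> V \<Longrightarrow> walk V E [u]"
  by (simp add: walk_def)

lemma walk_edge: "u \<in> V \<Longrightarrow> v \<in> V \<Longrightarrow> E u v \<Longrightarrow> walk V E [u, v]"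
  by (simp add: walk_def less_Suc_eq)

lemma walk_path2: "u \<in> V \<Longrightarrow> w \<in> V \<Longrightarrow> v \<in> V \<Longrightarrow> E u w \<Longrightarrow> E w v \<Longrightarrow> walk V E [u, w, v]"
  by (auto simp: walk_def less_Suc_eq nth_Cons split: nat.split)

lemma hd_eq_last_if_length_one: "length xs = Suc 0 \<Longrightarrow> hd xs = last xs"
  by (cases xs) auto

lemma walk_length_two: "walk V E xs \<Longrightarrow> length xs = Suc (Suc 0) \<Longrightarrow> E (hd xs) (last xs)"
  by (cases xs rule: remdups_adj.cases) (auto simp: walk_def)

lemma gdist_self: "u \<in> V \<Longrightarrow> gdist V E u u = 0"
  unfolding gdist_def by (rule Least_equality) (auto intro!: exI[of _ "[u]"] walk_singleton)

lemma gdist_eq_0_iff: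
  assumes "connected_graph V E" "u \<in> V" "v \<in> V"
  shows "gdist V E u v = 0 \<longleftrightarrow> u = v"
proof
  obtain xs where "walk V E xs" "hd xs = u" "last xs = v"
    using assms unfolding connected_graph_def by blast
  then have "\<exists>n xs. walk V E xs \<and> hd xs = u \<and> last xs = v \<and> length xs = Suc n"
    by (metis length_greater_0_conv walk_def Suc_pred)
  then have "\<exists>xs. walk V E xs \<and> hd xs = u \<and> last xs = v \<and> length xs = Suc (gdist V E u v)"
    unfolding gdist_def by (rule LeastI_ex)
  moreover assume "gdist V E u v = 0"
  ultimately show "u = v"
    by (metis One_nat_def hd_eq_last_if_length_one)
qed (simp add: assms gdist_self)

lemma gdist_adjacent:
  assumes "u \<in> V" "v \<in> V" "u \<noteq> v" "E u v"
  shows "gdist V E u v = 1"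
  unfolding gdist_def
proof (rule Least_equality)
  show "\<exists>xs. walk V E xs \<and> hd xs = u \<and> last xs = v \<and> length xs = Suc 1"
    using assms by (auto intro!: exI[of _ "[u, v]"] walk_edge)
  show "1 \<le> n" if "\<exists>xs. walk V E xs \<and> hd xs = u \<and> last xs = v \<and> length xs = Suc n" for n
    using that assms(3) hd_eq_last_if_length_one by (cases n) auto
qed

lemma gdist_common_neighbour:
  assumes "u \<in> V" "v \<in> V" "w \<in> V" "u \<noteq> v" "\<not> E u v" "E u w" "E w v"
  shows "gdist V E u v = 2"
  unfolding gdist_def
proof (rule Least_equality)
  show "\<exists>xs. walk V E xs \<and> hd xs = u \<and> last xs = v \<and> length xs = Suc 2"
    using assms by (auto intro!: exI[of _ "[u, w, v]"] walk_path2)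
  show "2 \<le> n" if "\<exists>xs. walk V E xs \<and> hd xs = u \<and> last xs = v \<and> length xs = Suc n" for n
  proof (rule ccontr)
    assume "\<not> 2 \<le> n"
    then consider "n = 0" | "n = 1" by linarith
    then show False
    proof cases
      case 1
      with that assms(4) show False using hd_eq_last_if_length_one by fastforce
    next
      case 2
      with that assms(5) show False using walk_length_two by fastforce
    qed
  qed
qed

lemma resolves_doubleton:
  "u \<noteq> v \<Longrightarrow> resolves V E x {u, v} \<longleftrightarrow> gdist V E x u \<noteq> gdist V E x v"
  unfolding resolves_def by (auto simp: doubleton_eq_iff)

lemma avg_resolving_share_uniform:
  assumes fin: "finite V" and conn: "connected_graph V E" and two: "2 \<le> card V"
    and uniform: "\<And>p. p \<in> vpairs V \<Longrightarrow> card (resolving_set_of_pair V E p) = k"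
    and w: "w \<in> V"
  shows "avg_resolving_share V E w = 1 / real k"
proof -
  let ?R = "pairs_resolved_by V E w"
  have "finite ?R"
    by (rule finite_subset[of _ "Pow V"]) (auto simp: pairs_resolved_by_def vpairs_def fin)
  obtain v where v: "v \<in> V" "v \<noteq> w"
  proof -
    have "\<not> V \<subseteq> {w}"
      using two card_mono[of "{w}" V] by fastforce
    then show ?thesis using that by blast
  qed
  then have "gdist V E w w \<noteq> gdist V E w v"
    using gdist_self gdist_eq_0_iff[OF conn w] w by metis
  then have "{w, v} \<in> ?R"
    using v w resolves_doubleton[of w v] unfolding pairs_resolved_by_def vpairs_def by blast
  with \<open>finite ?R\<close> have "card ?R \<noteq> 0" by auto
  have "(\<Sum>p\<in>?R. resolving_share V E w p) = (\<Sum>p\<in>?R. 1 / real k)"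
    by (rule sum.cong) (auto simp: resolving_share_def pairs_resolved_by_def uniform)
  with \<open>card ?R \<noteq> 0\<close> show ?thesis
    unfolding avg_resolving_share_def by simp
qed

lemma resolving_topological_index_uniform:
  assumes "finite V" "connected_graph V E" "2 \<le> card V"
    and "\<And>p. p \<in> vpairs V \<Longrightarrow> card (resolving_set_of_pair V E p) = k"
  shows "resolving_topological_index V E = real (card V) / real k"
  unfolding resolving_topological_index_def
  using avg_resolving_share_uniform[OF assms] by simp

definition petersen_dist :: "nat set \<Rightarrow> nat set \<Rightarrow> nat" where
  "petersen_dist S T = (if S = T then 0 else if S \<inter> T = {} then 1 else 2)"

lemma petersen_V_eq:
  "petersen_V = {{1,2},{1,3},{1,4},{1,5},{2,3},{2,4},{2,5},{3,4},{3,5},{4,5}}"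
  (is "_ = ?P")
proof
  have doubletons: "\<forall>x\<in>{1..5::nat}. \<forall>y\<in>{1..5}. x \<noteq> y \<longrightarrow> {x, y} \<in> ?P"
    by code_simp
  show "petersen_V \<subseteq> ?P"
  proof
    fix S assume "S \<in> petersen_V"
    then have S: "S \<subseteq> {1..5}" "card S = 2" by (auto simp: petersen_V_def)
    then obtain x y where xy: "S = {x, y}" "x \<noteq> y" by (auto simp: card_2_iff)
    with S have "x \<in> {1..5}" "y \<in> {1..5}" by auto
    with xy show "S \<in> ?P" using doubletons by simp
  qed
  have two_subsets: "\<forall>S\<in>?P. S \<subseteq> {1..5} \<and> card S = 2"
    by code_simp
  show "?P \<subseteq> petersen_V"
  proof
    fix S assume "S \<in> ?P"
    from bspec[OF two_subsets this] show "S \<in> petersen_V"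
      unfolding petersen_V_def by simp
  qed
qed

lemma card_petersen_V: "card petersen_V = 10"
  unfolding petersen_V_eq by code_simp

lemma petersen_common_neighbour:
  "\<forall>u\<in>petersen_V. \<forall>v\<in>petersen_V. u \<noteq> v \<and> u \<inter> v \<noteq> {} \<longrightarrow>
     (\<exists>w\<in>petersen_V. u \<inter> w = {} \<and> w \<inter> v = {})"
  unfolding petersen_V_eq by code_simp

lemma petersen_connected: "connected_graph petersen_V petersen_E"
  unfolding connected_graph_def
proof (intro ballI)
  fix u v assume uv: "u \<in> petersen_V" "v \<in> petersen_V"
  consider "u = v" | "u \<inter> v = {}" | "u \<noteq> v" "u \<inter> v \<noteq> {}" by blast
  then show "\<exists>xs. walk petersen_V petersen_E xs \<and> hd xs = u \<and> last xs = v"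
  proof cases
    case 1
    with uv show ?thesis by (intro exI[of _ "[u]"]) (simp add: walk_singleton)
  next
    case 2
    with uv show ?thesis by (intro exI[of _ "[u, v]"]) (simp add: walk_edge petersen_E_def)
  next
    case 3
    then obtain w where "w \<in> petersen_V" "u \<inter> w = {}" "w \<inter> v = {}"
      using petersen_common_neighbour uv by blast
    with uv show ?thesis by (intro exI[of _ "[u, w, v]"]) (simp add: walk_path2 petersen_E_def)
  qed
qed

lemma petersen_gdist:
  assumes uv: "u \<in> petersen_V" "v \<in> petersen_V"
  shows "gdist petersen_V petersen_E u v = petersen_dist u v"
proof -
  consider "u = v" | "u \<noteq> v" "u \<inter> v = {}" | "u \<noteq> v" "u \<inter> v \<noteq> {}" by blast
  then show ?thesis
  proof cases
    case 1
    with uv show ?thesis by (simp add: gdist_self petersen_dist_def)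
  next
    case 2
    with uv have "gdist petersen_V petersen_E u v = 1"
      by (intro gdist_adjacent) (simp_all add: petersen_E_def)
    with 2 show ?thesis by (simp add: petersen_dist_def)
  next
    case 3
    then obtain w where "w \<in> petersen_V" "u \<inter> w = {}" "w \<inter> v = {}"
      using petersen_common_neighbour uv by blast
    with 3 uv have "gdist petersen_V petersen_E u v = 2"
      by (intro gdist_common_neighbour[of _ _ _ w]) (simp_all add: petersen_E_def)
    with 3 show ?thesis by (simp add: petersen_dist_def)
  qed
qed

lemma petersen_resolving_count:
  "\<forall>u\<in>petersen_V. \<forall>v\<in>petersen_V. u \<noteq> v \<longrightarrow>
     card {x \<in> petersen_V. petersen_dist x u \<noteq> petersen_dist x v} = 6"
  unfolding petersen_V_eq petersen_dist_def by code_simp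

lemma card_petersen_resolving_set_of_pair:
  assumes "p \<in> vpairs petersen_V"
  shows "card (resolving_set_of_pair petersen_V petersen_E p) = 6"
proof -
  obtain u v where p: "p = {u, v}" "u \<in> petersen_V" "v \<in> petersen_V" "u \<noteq> v"
    using assms unfolding vpairs_def by blast
  then have "resolving_set_of_pair petersen_V petersen_E p =
      {x \<in> petersen_V. petersen_dist x u \<noteq> petersen_dist x v}"
    unfolding resolving_set_of_pair_def by (auto simp: resolves_doubleton petersen_gdist)
  with p petersen_resolving_count show ?thesis by simp
qed

theorem theorem3p6:
  shows "resolving_topological_index petersen_V petersen_E = 5 / 3"
proof -
  have "finite petersen_V" unfolding petersen_V_eq by simp
  then have "resolving_topological_index petersen_V petersen_E = real 10 / real 6"
    using resolving_topological_index_uniform[OF _ petersen_connected]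
      card_petersen_V card_petersen_resolving_set_of_pair by simp
  then show ?thesis by simp
qed

end
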